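(* If an online algorithm in the discrete-time model is $\alpha$-competitive for MaxProb (all-ties-win) when the true prior is $F_K$ and $\beta$-competitive when the true prior is $F_k$ for every $k\in[K-1]$, then there is a minor-oblivious algorithm with the same guarantees.
   Context: Discrete-time model: $n$ values $x_1,\dots,x_n$ i.i.d. from a true prior are revealed in the order $x_1,\dots,x_n$; an online algorithm irrevocably accepts at most one; $\mathrm{ALG}$ is the accepted index. MaxProb with all-ties-win: success iff the accepted value equals $\max_i x_i$; the competitive ratio is the success probability. $[K]=\{1,\dots,K\}$; $\tilde F$ is a distribution on $[K]$ with pmf $\tilde f$, $\tilde f(1)>0$; $F_k(\ell)=\tilde F(\ell)/\tilde F(k)$ for $\ell\le k$ and $F_k(\ell)=1$ for $\ell>k$. The conditional acceptance probability of an algorithm is $\mathrm{Acc}_t(\mathbf x_{1:t})=\Pr[\mathrm{ALG}=t\mid\mathrm{ALG}\ge t,(x_1,\dots,x_t)=\mathbf x_{1:t}]$. An algorithm is minor-oblivious if $\mathrm{Acc}_t(\mathbf x_{1:t})=\mathrm{Acc}_t(\mathbf y_{1:t})$ whenever $x_t=y_t=\max\mathbf x_{1:t}=\max\mathbf y_{1:t}$. *)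

theory Defs
  imports Complex_Main
begin

text \<open>An online algorithm is represented by its conditional acceptance
  probabilities: acc xs = Acc_t(x_{1:t}) where xs = [x_1,...,x_t] (t = length xs).\<close>

definition is_pmf_on :: "nat \<Rightarrow> (nat \<Rightarrow> real) \<Rightarrow> bool" where
  "is_pmf_on K f \<longleftrightarrow> (\<forall>l. 0 \<le> f l) \<and> (\<forall>l. l \<notin> {1..K} \<longrightarrow> f l = 0)
      \<and> (\<Sum>l=1..K. f l) = 1"

definition cdf :: "(nat \<Rightarrow> real) \<Rightarrow> nat \<Rightarrow> real" where
  "cdf f k = (\<Sum>l=1..k. f l)"

definition trunc_pmf :: "(nat \<Rightarrow> real) \<Rightarrow> nat \<Rightarrow> nat \<Rightarrow> real" where
  "trunc_pmf f k l = (if 1 \<le> l \<and> l \<le> k then f l / cdf f k else 0)"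

definition prefixes :: "nat \<Rightarrow> nat \<Rightarrow> nat list set" where
  "prefixes n K = {xs. xs \<noteq> [] \<and> length xs \<le> n \<and> set xs \<subseteq> {1..K}}"

definition valid_alg :: "nat \<Rightarrow> nat \<Rightarrow> (nat list \<Rightarrow> real) \<Rightarrow> bool" where
  "valid_alg n K acc \<longleftrightarrow> (\<forall>xs\<in>prefixes n K. 0 \<le> acc xs \<and> acc xs \<le> 1)"

definition minor_oblivious :: "nat \<Rightarrow> nat \<Rightarrow> (nat list \<Rightarrow> real) \<Rightarrow> bool" where
  "minor_oblivious n K acc \<longleftrightarrow>
     (\<forall>xs\<in>prefixes n K. \<forall>ys\<in>prefixes n K.
        length xs = length ys \<and> last xs = last ys \<and>
        last xs = Max (set xs) \<and> last ys = Max (set ys) \<longrightarrow> acc xs = acc ys)"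

text \<open>Probability that the algorithm accepts exactly at step t+1 (0-based index t),
  given the full input xs.\<close>
definition stop_prob :: "(nat list \<Rightarrow> real) \<Rightarrow> nat list \<Rightarrow> nat \<Rightarrow> real" where
  "stop_prob acc xs t = (\<Prod>s<t. 1 - acc (take (Suc s) xs)) * acc (take (Suc t) xs)"

definition success_prob :: "nat \<Rightarrow> nat \<Rightarrow> (nat \<Rightarrow> real) \<Rightarrow> (nat list \<Rightarrow> real) \<Rightarrow> real" where
  "success_prob n K p acc =
     (\<Sum>xs\<in>{xs. length xs = n \<and> set xs \<subseteq> {1..K}}.
        (\<Prod>i<n. p (xs ! i)) *
        (\<Sum>t<n. stop_prob acc xs t * (if xs ! t = Max (set xs) then 1 else 0)))"

end

theory Submission
  imports Defs
begin

text \<open>Under a truncated prior \<open>F\<^sub>k\<close> the success probability depends on the algorithm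
  only through the (unnormalised, base-weight) masses \<open>W(t,y)\<close> (\<open>accept_max_mass\<close>) of
  the events "the algorithm stops at step \<open>t+1\<close> on the value \<open>y\<close>, which is the maximum
  so far": such a stop wins iff the remaining \<open>n-t-1\<close> values are at most \<open>y\<close>, and
  truncation to \<open>[k]\<close> divides \<open>W(t,y)\<close> by \<open>F(k)\<^sup>t\<^sup>+\<^sup>1\<close> for \<open>y \<le> k\<close> and kills it
  otherwise. So it suffices to find a minor-oblivious algorithm with the same masses \<open>W\<close>.

  Let \<open>U(t,m)\<close> (\<open>survival_mass\<close>) be the mass of "the first \<open>t\<close> values are at most \<open>m\<close>
  and the algorithm has not stopped". Then \<open>U(t+1,m) = F(m) U(t,m) - D(t,m)\<close>, where
  \<open>D(t,m)\<close> (\<open>accept_mass\<close>) is the mass of stopping at step \<open>t+1\<close> with all values so far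
  at most \<open>m\<close>, and \<open>D(t,m) \<ge> \<Sum>\<^sub>y\<^sub>\<le>\<^sub>m W(t,y)\<close>, with equality for algorithms that only
  stop on prefix maxima. The new algorithm accepts a prefix maximum \<open>y\<close> at step \<open>t+1\<close>
  with probability \<open>W(t,y) / (f(y) U'(t,y))\<close>, where \<open>U'\<close> (\<open>oblivious_survival_mass\<close>)
  solves the recursion with equality; by induction on \<open>t\<close> its own \<open>U\<close> is \<open>U'\<close> and its
  own masses are \<open>W\<close>, and \<open>U \<le> U'\<close> for the original algorithm keeps the acceptance
  probabilities at most 1.\<close>

definition lists_of_len :: "nat \<Rightarrow> 'a set \<Rightarrow> 'a list set" where
  "lists_of_len r A = {xs. length xs = r \<and> set xs \<subseteq> A}"

lemma finite_lists_of_len [simp]: "finite A \<Longrightarrow> finite (lists_of_len r A)"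
  using finite_lists_length_eq[of A r] by (simp add: lists_of_len_def conj_commute)

lemma lists_of_len_0 [simp]: "lists_of_len 0 A = {[]}"
  by (auto simp: lists_of_len_def)

lemma lists_of_len_Suc_0: "lists_of_len (Suc 0) A = (\<lambda>y. [y]) ` A"
  by (auto simp: lists_of_len_def length_Suc_conv)

lemma sum_lists_of_len_add:
  "(\<Sum>xs\<in>lists_of_len (r + s) A. g xs) = (\<Sum>ys\<in>lists_of_len r A. \<Sum>ws\<in>lists_of_len s A. g (ys @ ws))"
proof -
  have image_append: "lists_of_len (r + s) A = (\<lambda>(ys, ws). ys @ ws) ` (lists_of_len r A \<times> lists_of_len s A)"
  proof (intro equalityI subsetI)
    fix xs assume "xs \<in> lists_of_len (r + s) A"
    then have "(take r xs, drop r xs) \<in> lists_of_len r A \<times> lists_of_len s A"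
      by (auto simp: lists_of_len_def dest: in_set_takeD in_set_dropD)
    then show "xs \<in> (\<lambda>(ys, ws). ys @ ws) ` (lists_of_len r A \<times> lists_of_len s A)"
      by (metis (no_types, lifting) append_take_drop_id case_prod_conv image_eqI)
  qed (auto simp: lists_of_len_def)
  have "inj_on (\<lambda>(ys, ws). ys @ ws) (lists_of_len r A \<times> lists_of_len s A)"
    by (auto simp: inj_on_def lists_of_len_def)
  then show ?thesis
    by (simp add: image_append sum.reindex sum.cartesian_product case_prod_unfold)
qed

lemma sum_lists_of_len_Suc:
  "(\<Sum>xs\<in>lists_of_len (Suc r) A. g xs) = (\<Sum>zs\<in>lists_of_len r A. \<Sum>y\<in>A. g (zs @ [y]))"
  using sum_lists_of_len_add[where r = r and s = 1]
  by (simp add: lists_of_len_Suc_0 sum.reindex inj_on_def)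

lemma sum_lists_of_len_split:
  assumes "t < n"
  shows "(\<Sum>xs\<in>lists_of_len n A. g xs)
    = (\<Sum>zs\<in>lists_of_len t A. \<Sum>y\<in>A. \<Sum>ws\<in>lists_of_len (n - Suc t) A. g (zs @ y # ws))"
  using sum_lists_of_len_add[where r = "Suc t" and s = "n - Suc t"] assms
  by (simp add: sum_lists_of_len_Suc)

lemma sum_lists_of_len_prod_list:
  fixes p :: "'a \<Rightarrow> 'b::comm_semiring_1"
  shows "(\<Sum>ws\<in>lists_of_len r A. prod_list (map p ws)) = sum p A ^ r"
proof (induction r)
  case (Suc r)
  then show ?case
    by (simp add: sum_lists_of_len_Suc sum_distrib_left[symmetric] sum_distrib_right[symmetric] mult.commute)
qed simp

lemma sum_lists_of_len_restrict:
  assumes "finite A"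
  shows "(\<Sum>zs\<in>lists_of_len r A. if set zs \<subseteq> B then g zs else 0) = (\<Sum>zs\<in>lists_of_len r (A \<inter> B). g zs)"
proof -
  have "{zs \<in> lists_of_len r A. set zs \<subseteq> B} = lists_of_len r (A \<inter> B)"
    by (auto simp: lists_of_len_def)
  then show ?thesis
    using sum.inter_filter[of "lists_of_len r A" g "\<lambda>zs. set zs \<subseteq> B"] assms by simp
qed

lemma eq_Max_set_append_Cons_iff:
  fixes y :: "'a::linorder"
  shows "y = Max (set (zs @ y # ws)) \<longleftrightarrow> set zs \<subseteq> {..y} \<and> set ws \<subseteq> {..y}"
proof
  assume "y = Max (set (zs @ y # ws))"
  then show "set zs \<subseteq> {..y} \<and> set ws \<subseteq> {..y}"
    by (metis List.finite_set Max_ge Un_iff atMost_iff set_append list.set_intros(2) subsetI)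
next
  assume "set zs \<subseteq> {..y} \<and> set ws \<subseteq> {..y}"
  then show "y = Max (set (zs @ y # ws))"
    by (intro Max_eqI[symmetric]) auto
qed

definition survival :: "(nat list \<Rightarrow> real) \<Rightarrow> nat list \<Rightarrow> real" where
  "survival acc zs = (\<Prod>s<length zs. 1 - acc (take (Suc s) zs))"

lemma survival_Nil [simp]: "survival acc [] = 1"
  by (simp add: survival_def)

lemma survival_snoc: "survival acc (zs @ [y]) = survival acc zs * (1 - acc (zs @ [y]))"
  unfolding survival_def by (simp add: prod.lessThan_Suc)

lemma stop_prob_append_Cons: "stop_prob acc (zs @ y # ws) (length zs) = survival acc zs * acc (zs @ [y])"
proof -
  have "(\<Prod>s<length zs. 1 - acc (take (Suc s) (zs @ y # ws))) = survival acc zs"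
    unfolding survival_def by (intro prod.cong) auto
  then show ?thesis by (simp add: stop_prob_def)
qed

definition accept_max_mass :: "(nat \<Rightarrow> real) \<Rightarrow> (nat list \<Rightarrow> real) \<Rightarrow> nat \<Rightarrow> nat \<Rightarrow> real" where
  "accept_max_mass p acc t y =
     (\<Sum>zs\<in>lists_of_len t {1..y}. prod_list (map p zs) * p y * survival acc zs * acc (zs @ [y]))"

definition accept_mass :: "(nat \<Rightarrow> real) \<Rightarrow> (nat list \<Rightarrow> real) \<Rightarrow> nat \<Rightarrow> nat \<Rightarrow> real" where
  "accept_mass p acc t m =
     (\<Sum>zs\<in>lists_of_len t {1..m}. \<Sum>y\<in>{1..m}. prod_list (map p zs) * p y * survival acc zs * acc (zs @ [y]))"

definition survival_mass :: "(nat \<Rightarrow> real) \<Rightarrow> (nat list \<Rightarrow> real) \<Rightarrow> nat \<Rightarrow> nat \<Rightarrow> real" where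
  "survival_mass p acc t m = (\<Sum>zs\<in>lists_of_len t {1..m}. prod_list (map p zs) * survival acc zs)"

lemma survival_mass_0 [simp]: "survival_mass p acc 0 m = 1"
  by (simp add: survival_mass_def)

lemma survival_mass_Suc:
  "survival_mass p acc (Suc t) m = cdf p m * survival_mass p acc t m - accept_mass p acc t m"
proof -
  have "survival_mass p acc (Suc t) m = (\<Sum>zs\<in>lists_of_len t {1..m}. \<Sum>y\<in>{1..m}.
      prod_list (map p zs) * p y * survival acc zs
      - prod_list (map p zs) * p y * survival acc zs * acc (zs @ [y]))"
    unfolding survival_mass_def by (simp add: sum_lists_of_len_Suc survival_snoc algebra_simps)
  also have "\<dots> = cdf p m * survival_mass p acc t m - accept_mass p acc t m"
    unfolding survival_mass_def accept_mass_def cdf_def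
    by (simp add: sum_subtractf sum_distrib_left sum_distrib_right algebra_simps)
  finally show ?thesis .
qed

lemma success_at_step_eq:
  assumes "t < n"
  shows "(\<Sum>xs\<in>lists_of_len n {1..K}.
            prod_list (map p xs) * stop_prob acc xs t * (if xs ! t = Max (set xs) then 1 else 0))
       = (\<Sum>y\<in>{1..K}. accept_max_mass p acc t y * cdf p y ^ (n - Suc t))"
proof -
  define head where "head zs y =
    (if set zs \<subseteq> {..y} then prod_list (map p zs) * p y * survival acc zs * acc (zs @ [y]) else 0)"
    for zs y
  define tail where "tail ws y = (if set ws \<subseteq> {..y} then prod_list (map p ws) else 0)" for ws y
  have factor: "prod_list (map p (zs @ y # ws)) * stop_prob acc (zs @ y # ws) t
      * (if (zs @ y # ws) ! t = Max (set (zs @ y # ws)) then 1 else 0) = head zs y * tail ws y"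
    if "zs \<in> lists_of_len t {1..K}" for zs y ws
    using that stop_prob_append_Cons[of acc zs y ws] eq_Max_set_append_Cons_iff[of y zs ws]
    by (auto simp: head_def tail_def lists_of_len_def nth_append)
  have sum_head: "(\<Sum>zs\<in>lists_of_len t {1..K}. head zs y) = accept_max_mass p acc t y"
    and sum_tail: "(\<Sum>ws\<in>lists_of_len (n - Suc t) {1..K}. tail ws y) = cdf p y ^ (n - Suc t)"
    if "y \<in> {1..K}" for y
    using that
    by (simp_all add: head_def tail_def accept_max_mass_def cdf_def sum_lists_of_len_restrict
        sum_lists_of_len_prod_list Int_absorb2)
  have "(\<Sum>xs\<in>lists_of_len n {1..K}.
            prod_list (map p xs) * stop_prob acc xs t * (if xs ! t = Max (set xs) then 1 else 0))
      = (\<Sum>zs\<in>lists_of_len t {1..K}. \<Sum>y\<in>{1..K}. head zs y *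
           (\<Sum>ws\<in>lists_of_len (n - Suc t) {1..K}. tail ws y))"
    unfolding sum_lists_of_len_split[OF assms] sum_distrib_left by (intro sum.cong refl factor)
  also have "\<dots> = (\<Sum>y\<in>{1..K}. (\<Sum>zs\<in>lists_of_len t {1..K}. head zs y) * cdf p y ^ (n - Suc t))"
    by (subst sum.swap) (intro sum.cong refl, metis sum_tail sum_distrib_right)
  also have "\<dots> = (\<Sum>y\<in>{1..K}. accept_max_mass p acc t y * cdf p y ^ (n - Suc t))"
    by (intro sum.cong refl) (metis sum_head)
  finally show ?thesis .
qed

lemma success_prob_eq_sum_accept_max_mass:
  "success_prob n K p acc = (\<Sum>t<n. \<Sum>y\<in>{1..K}. accept_max_mass p acc t y * cdf p y ^ (n - Suc t))"
proof -
  have "success_prob n K p acc = (\<Sum>t<n. \<Sum>xs\<in>lists_of_len n {1..K}.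
      prod_list (map p xs) * stop_prob acc xs t * (if xs ! t = Max (set xs) then 1 else 0))"
    unfolding success_prob_def lists_of_len_def[symmetric]
    by (subst sum.swap, intro sum.cong refl)
      (simp add: lists_of_len_def prod.list_conv_set_nth atLeast0LessThan sum_distrib_left mult.assoc)
  also have "\<dots> = (\<Sum>t<n. \<Sum>y\<in>{1..K}. accept_max_mass p acc t y * cdf p y ^ (n - Suc t))"
    by (intro sum.cong refl success_at_step_eq) simp
  finally show ?thesis .
qed

lemma prod_list_trunc_pmf:
  "set zs \<subseteq> {1..k} \<Longrightarrow> prod_list (map (trunc_pmf p k) zs) = prod_list (map p zs) / cdf p k ^ length zs"
  by (induction zs) (auto simp: trunc_pmf_def)

lemma accept_max_mass_trunc_pmf:
  assumes "1 \<le> y"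
  shows "accept_max_mass (trunc_pmf p k) acc t y
    = (if y \<le> k then accept_max_mass p acc t y / cdf p k ^ Suc t else 0)"
proof (cases "y \<le> k")
  case True
  have "prod_list (map (trunc_pmf p k) zs) * trunc_pmf p k y
      = prod_list (map p zs) * p y / cdf p k ^ Suc t" if "zs \<in> lists_of_len t {1..y}" for zs
  proof -
    have "set zs \<subseteq> {1..k}" "length zs = t"
      using that True by (auto simp: lists_of_len_def)
    then show ?thesis
      using True assms by (simp add: prod_list_trunc_pmf trunc_pmf_def)
  qed
  then show ?thesis
    using True unfolding accept_max_mass_def by (simp add: sum_divide_distrib)
next
  case False
  then show ?thesis by (simp add: accept_max_mass_def trunc_pmf_def)
qed

lemma success_prob_trunc_pmf_cong:
  assumes "\<And>t y. t < n \<Longrightarrow> y \<in> {1..K} \<Longrightarrow> accept_max_mass p acc t y = accept_max_mass p acc' t y"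
  shows "success_prob n K (trunc_pmf p k) acc = success_prob n K (trunc_pmf p k) acc'"
  unfolding success_prob_eq_sum_accept_max_mass
  using assms by (intro sum.cong refl) (simp add: accept_max_mass_trunc_pmf)

fun oblivious_survival_mass :: "(nat \<Rightarrow> real) \<Rightarrow> (nat list \<Rightarrow> real) \<Rightarrow> nat \<Rightarrow> nat \<Rightarrow> real" where
  "oblivious_survival_mass p acc 0 m = 1"
| "oblivious_survival_mass p acc (Suc t) m =
     cdf p m * oblivious_survival_mass p acc t m - (\<Sum>y\<in>{1..m}. accept_max_mass p acc t y)"

text \<open>If the denominator vanishes then so does \<open>W(t,y)\<close>, so the fallback value is irrelevant.\<close>

definition oblivious_rate :: "(nat \<Rightarrow> real) \<Rightarrow> (nat list \<Rightarrow> real) \<Rightarrow> nat \<Rightarrow> nat \<Rightarrow> real" where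
  "oblivious_rate p acc t y =
     (let u = p y * oblivious_survival_mass p acc t y in if 0 < u then accept_max_mass p acc t y / u else 0)"

definition oblivious_acc :: "(nat \<Rightarrow> real) \<Rightarrow> (nat list \<Rightarrow> real) \<Rightarrow> nat list \<Rightarrow> real" where
  "oblivious_acc p acc xs =
     (if xs \<noteq> [] \<and> last xs = Max (set xs) then oblivious_rate p acc (length xs - 1) (last xs) else 0)"

lemma minor_oblivious_oblivious_acc: "minor_oblivious n K (oblivious_acc p acc)"
  unfolding minor_oblivious_def oblivious_acc_def by auto

lemma oblivious_acc_snoc:
  "oblivious_acc p acc (zs @ [y]) = (if set zs \<subseteq> {..y} then oblivious_rate p acc (length zs) y else 0)"
  using eq_Max_set_append_Cons_iff[of y zs "[]"] by (auto simp: oblivious_acc_def)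

lemma accept_max_mass_oblivious_acc_eq:
  "accept_max_mass p (oblivious_acc p acc) t y
     = oblivious_rate p acc t y * p y * survival_mass p (oblivious_acc p acc) t y"
  unfolding accept_max_mass_def survival_mass_def sum_distrib_left
  by (intro sum.cong refl) (auto simp: oblivious_acc_snoc lists_of_len_def)

lemma accept_mass_oblivious_acc:
  "accept_mass p (oblivious_acc p acc) t m = (\<Sum>y\<in>{1..m}. accept_max_mass p (oblivious_acc p acc) t y)"
proof -
  let ?acc' = "oblivious_acc p acc"
  have "accept_mass p ?acc' t m = (\<Sum>y\<in>{1..m}. \<Sum>zs\<in>lists_of_len t {1..m}.
      if set zs \<subseteq> {..y} then prod_list (map p zs) * p y * survival ?acc' zs * oblivious_rate p acc t y else 0)"
    unfolding accept_mass_def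
    by (subst sum.swap) (intro sum.cong refl, auto simp: oblivious_acc_snoc lists_of_len_def)
  also have "\<dots> = (\<Sum>y\<in>{1..m}. accept_max_mass p ?acc' t y)"
  proof (intro sum.cong refl)
    fix y assume "y \<in> {1..m}"
    then have "{1..m} \<inter> {..y} = {1..y}" by auto
    then show "(\<Sum>zs\<in>lists_of_len t {1..m}. if set zs \<subseteq> {..y}
        then prod_list (map p zs) * p y * survival ?acc' zs * oblivious_rate p acc t y else 0)
      = accept_max_mass p ?acc' t y"
      unfolding sum_lists_of_len_restrict[OF finite_atLeastAtMost] accept_max_mass_def
      by (intro sum.cong refl) (auto simp: oblivious_acc_snoc lists_of_len_def)
  qed
  finally show ?thesis .
qed

context
  fixes n K :: nat and p :: "nat \<Rightarrow> real" and acc :: "nat list \<Rightarrow> real"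
  assumes valid: "valid_alg n K acc" and nonneg: "\<And>l. 0 \<le> p l"
begin

lemma acc_bounds:
  assumes "xs \<noteq> []" "length xs \<le> n" "set xs \<subseteq> {1..K}"
  shows "0 \<le> acc xs" "acc xs \<le> 1"
  using valid assms by (auto simp: valid_alg_def prefixes_def)

lemma survival_nonneg:
  assumes "length zs \<le> n" "set zs \<subseteq> {1..K}"
  shows "0 \<le> survival acc zs"
  unfolding survival_def
proof (intro prod_nonneg)
  fix s assume "s \<in> {..<length zs}"
  then have "take (Suc s) zs \<noteq> []" "length (take (Suc s) zs) \<le> n" "set (take (Suc s) zs) \<subseteq> {1..K}"
    using assms set_take_subset[of "Suc s" zs] by auto
  then show "0 \<le> 1 - acc (take (Suc s) zs)"
    using acc_bounds(2) by simp
qed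

lemma accept_max_mass_summand_bounds:
  assumes "length zs < n" "set zs \<subseteq> {1..K}" "y \<in> {1..K}"
  defines "q \<equiv> prod_list (map p zs) * p y * survival acc zs"
  shows "0 \<le> q * acc (zs @ [y])" and "q * acc (zs @ [y]) \<le> q"
proof -
  have "0 \<le> q"
    unfolding q_def using assms survival_nonneg[of zs]
    by (intro mult_nonneg_nonneg prod_list_nonneg) (auto simp: nonneg)
  moreover have "0 \<le> acc (zs @ [y])" "acc (zs @ [y]) \<le> 1"
    using acc_bounds[of "zs @ [y]"] assms by auto
  ultimately show "0 \<le> q * acc (zs @ [y])" and "q * acc (zs @ [y]) \<le> q"
    by (simp_all add: mult_left_le)
qed

lemma accept_max_mass_nonneg: "t < n \<Longrightarrow> y \<in> {1..K} \<Longrightarrow> 0 \<le> accept_max_mass p acc t y"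
  unfolding accept_max_mass_def
  by (intro sum_nonneg accept_max_mass_summand_bounds) (auto simp: lists_of_len_def)

lemma accept_max_mass_le:
  "t < n \<Longrightarrow> y \<in> {1..K} \<Longrightarrow> accept_max_mass p acc t y \<le> p y * survival_mass p acc t y"
  unfolding accept_max_mass_def survival_mass_def sum_distrib_left
  by (intro sum_mono order.trans[OF accept_max_mass_summand_bounds(2)])
    (auto simp: lists_of_len_def algebra_simps)

lemma sum_accept_max_mass_le_accept_mass:
  assumes "t < n" "m \<le> K"
  shows "(\<Sum>y\<in>{1..m}. accept_max_mass p acc t y) \<le> accept_mass p acc t m"
  unfolding accept_mass_def accept_max_mass_def
proof (subst sum.swap, intro sum_mono sum_mono2)
  fix y zs assume "y \<in> {1..m}" "zs \<in> lists_of_len t {1..m} - lists_of_len t {1..y}"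
  then show "0 \<le> prod_list (map p zs) * p y * survival acc zs * acc (zs @ [y])"
    using assms by (intro accept_max_mass_summand_bounds) (auto simp: lists_of_len_def)
qed (simp, fastforce simp: lists_of_len_def)

lemma survival_mass_le_oblivious_survival_mass:
  "t \<le> n \<Longrightarrow> m \<le> K \<Longrightarrow>
    survival_mass p acc t m \<le> oblivious_survival_mass p acc t m"
proof (induction t)
  case (Suc t)
  have "0 \<le> cdf p m"
    unfolding cdf_def by (simp add: sum_nonneg nonneg)
  then have "cdf p m * survival_mass p acc t m \<le> cdf p m * oblivious_survival_mass p acc t m"
    using Suc by (intro mult_left_mono) auto
  then show ?case
    using Suc sum_accept_max_mass_le_accept_mass[of t m] by (simp add: survival_mass_Suc)
qed simp

lemma accept_max_mass_le_oblivious_survival_mass: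
  "t < n \<Longrightarrow> y \<in> {1..K} \<Longrightarrow> accept_max_mass p acc t y \<le> p y * oblivious_survival_mass p acc t y"
  by (rule order.trans[OF accept_max_mass_le mult_left_mono[OF survival_mass_le_oblivious_survival_mass]])
    (auto simp: nonneg)

lemma oblivious_rate_bounds:
  assumes "t < n" "y \<in> {1..K}"
  shows "0 \<le> oblivious_rate p acc t y" "oblivious_rate p acc t y \<le> 1"
  using accept_max_mass_nonneg[OF assms] accept_max_mass_le_oblivious_survival_mass[OF assms]
  by (auto simp: oblivious_rate_def Let_def)

lemma accept_max_mass_oblivious_acc_if_survival_mass:
  assumes "t < n" "y \<in> {1..K}"
    and "survival_mass p (oblivious_acc p acc) t y = oblivious_survival_mass p acc t y"
  shows "accept_max_mass p (oblivious_acc p acc) t y = accept_max_mass p acc t y"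
  using accept_max_mass_nonneg[OF assms(1,2)] accept_max_mass_le_oblivious_survival_mass[OF assms(1,2)]
  by (simp add: accept_max_mass_oblivious_acc_eq assms(3) oblivious_rate_def Let_def)

lemma survival_mass_oblivious_acc:
  "t \<le> n \<Longrightarrow> m \<le> K \<Longrightarrow> survival_mass p (oblivious_acc p acc) t m = oblivious_survival_mass p acc t m"
proof (induction t arbitrary: m)
  case (Suc t)
  have "accept_max_mass p (oblivious_acc p acc) t y = accept_max_mass p acc t y" if "y \<in> {1..m}" for y
    using Suc that by (intro accept_max_mass_oblivious_acc_if_survival_mass) auto
  then show ?case
    using Suc by (simp add: survival_mass_Suc accept_mass_oblivious_acc)
qed simp

lemma accept_max_mass_oblivious_acc:
  "t < n \<Longrightarrow> y \<in> {1..K} \<Longrightarrow> accept_max_mass p (oblivious_acc p acc) t y = accept_max_mass p acc t y"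
  by (simp add: accept_max_mass_oblivious_acc_if_survival_mass survival_mass_oblivious_acc)

lemma valid_alg_oblivious_acc: "valid_alg n K (oblivious_acc p acc)"
  unfolding valid_alg_def
proof
  fix xs assume "xs \<in> prefixes n K"
  then have xs: "xs \<noteq> []" "length xs \<le> n" "set xs \<subseteq> {1..K}"
    by (auto simp: prefixes_def)
  have "length xs - 1 < n"
    using xs(1,2) by (cases xs) auto
  moreover have "last xs \<in> {1..K}"
    using last_in_set[OF xs(1)] xs(3) by blast
  ultimately have "0 \<le> oblivious_rate p acc (length xs - 1) (last xs)"
    and "oblivious_rate p acc (length xs - 1) (last xs) \<le> 1"
    using oblivious_rate_bounds by blast+
  then show "0 \<le> oblivious_acc p acc xs \<and> oblivious_acc p acc xs \<le> 1"
    unfolding oblivious_acc_def by auto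
qed

end

theorem mainTheorem19:
  fixes n K :: nat and ft :: "nat \<Rightarrow> real" and \<alpha> \<beta> :: real
    and acc :: "nat list \<Rightarrow> real"
  assumes "1 \<le> n" and "1 \<le> K"
    and "is_pmf_on K ft" and "ft 1 > 0"
    and "valid_alg n K acc"
    and "success_prob n K (trunc_pmf ft K) acc \<ge> \<alpha>"
    and "\<forall>k\<in>{1..K-1}. success_prob n K (trunc_pmf ft k) acc \<ge> \<beta>"
  shows "\<exists>acc'. valid_alg n K acc' \<and> minor_oblivious n K acc'
           \<and> success_prob n K (trunc_pmf ft K) acc' \<ge> \<alpha>
           \<and> (\<forall>k\<in>{1..K-1}. success_prob n K (trunc_pmf ft k) acc' \<ge> \<beta>)"
proof -
  have nonneg: "\<And>l. 0 \<le> ft l"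
    using \<open>is_pmf_on K ft\<close> by (simp add: is_pmf_on_def)
  let ?acc' = "oblivious_acc ft acc"
  have "success_prob n K (trunc_pmf ft k) ?acc' = success_prob n K (trunc_pmf ft k) acc" for k
    using accept_max_mass_oblivious_acc[where p = ft, OF \<open>valid_alg n K acc\<close> nonneg]
    by (intro success_prob_trunc_pmf_cong)
  moreover have "valid_alg n K ?acc'"
    using valid_alg_oblivious_acc[where p = ft, OF \<open>valid_alg n K acc\<close> nonneg] .
  ultimately show ?thesis
    using minor_oblivious_oblivious_acc assms(6,7) by auto
qed

end
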